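(* Let $\mathcal{H}$ be a real Hilbert space, $f:\mathcal{H}\to\mathbb{R}$ $\mu$-strongly convex and $L$-smooth with $0<\mu<L<\infty$, $g:\mathcal{H}\to\mathbb{R}\cup\{+\infty\}$ convex, proper and lower semicontinuous, $q=\mu/L$, and $x^\star$ the unique minimizer of $f+g$. Let the Prox-ITEM iterates and the quantities $\mathcal{V}_k$ be as defined in the context. Then $\mathcal{V}_{k+1}\le\mathcal{V}_k$ for every $k\in\mathbb{N}_0$.
   Context: $\operatorname{Prox}^{\gamma}_g(x)=\operatorname{argmin}_z\big(g(z)+\frac{1}{2\gamma}\|x-z\|^2\big)$. Prox-ITEM from $x^0\in\mathcal{H}$: $A_0=0$, $z^0=x^0$, and for $k\ge0$: $A_{k+1}=\frac{(1+q)A_k+2(1+\sqrt{(1+A_k)(1+qA_k)})}{(1-q)^2}$, $\beta_k=\frac{A_k}{(1-q)A_{k+1}}$, $\delta_k=\sqrt{\frac{A_{k+1}}{1+qA_{k+1}}}$, $y^k=(1-\beta_k)z^k+\beta_kx^k$, $\bar z^{k+1}=(1-q\delta_k)z^k+q\delta_ky^k-\frac{\delta_k}{L}\nabla f(y^k)$, $z^{k+1}=\operatorname{Prox}^{\delta_k/L}_g(\bar z^{k+1})$, $x^{k+1}=y^k-\frac1L\nabla f(y^k)-\frac1{\delta_k}(\bar z^{k+1}-z^{k+1})$. Define $\mathcal{I}_f(x,y)=f(x)-f(y)-\langle\nabla f(y),x-y\rangle-\frac{\mu}{2}\|x-y\|^2-\frac{1}{2(L-\mu)}\|\nabla f(x)-\nabla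 f(y)-\mu(x-y)\|^2$ and $\mathcal{I}_g(x,y,s)=g(x)-g(y)-\langle s,x-y\rangle$. Let $s_g^k=L\delta_{k-1}^{-1}(\bar z^k-z^k)$ for $k\ge1$ (so $s_g^k\in\partial g(z^k)$), $s_g^\star=-\nabla f(x^\star)$, and $\sigma_k=\sqrt{(1+A_k)(1+qA_k)}$. For $k\in\mathbb{N}_0$, $$\mathcal{V}_k=(1-q)A_k\mathcal{I}_f(y^{k-1},x^\star)+qA_k\mathcal{I}_g(x^\star,z^k,s_g^k)+(qA_k+1-\sigma_k)\mathcal{I}_g(z^k,x^\star,s_g^\star)+\frac{A_k}{2L}\|s_g^k-s_g^\star\|^2+(L+\mu A_k)\|z^k-x^\star\|^2,$$ with the conventions $y^{-1}=y^0$, $s_g^0=s_g^1$, $0\cdot(\pm\infty)=0$. *)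

theory Defs
  imports "HOL-Analysis.Analysis" "HOL-Library.Extended_Real"
begin

definition strongly_convex :: "real \<Rightarrow> ('a::real_inner \<Rightarrow> real) \<Rightarrow> bool" where
  "strongly_convex \<mu> f \<longleftrightarrow> (\<forall>x y t. 0 \<le> t \<and> t \<le> 1 \<longrightarrow>
     f ((1 - t) *\<^sub>R x + t *\<^sub>R y) \<le> (1 - t) * f x + t * f y - \<mu> / 2 * t * (1 - t) * (norm (x - y))\<^sup>2)"

text \<open>Extended-valued functions g : H -> R union {+infinity}, modelled as ereal-valued functions never -infinity.\<close>
definition ext_convex :: "('a::real_vector \<Rightarrow> ereal) \<Rightarrow> bool" where
  "ext_convex g \<longleftrightarrow> (\<forall>x y t. 0 \<le> t \<and> t \<le> 1 \<longrightarrow>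
     g ((1 - t) *\<^sub>R x + t *\<^sub>R y) \<le> ereal (1 - t) * g x + ereal t * g y)"

definition ext_proper :: "('a \<Rightarrow> ereal) \<Rightarrow> bool" where
  "ext_proper g \<longleftrightarrow> (\<forall>x. g x \<noteq> -\<infinity>) \<and> (\<exists>x. g x \<noteq> \<infinity>)"

definition ext_lsc :: "('a::topological_space \<Rightarrow> ereal) \<Rightarrow> bool" where
  "ext_lsc g \<longleftrightarrow> (\<forall>c. closed {x. g x \<le> c})"

definition prox :: "real \<Rightarrow> ('a::real_inner \<Rightarrow> ereal) \<Rightarrow> 'a \<Rightarrow> 'a" where
  "prox \<gamma> g x = (THE z. \<forall>w. g z + ereal (1 / (2 * \<gamma>) * (norm (x - z))\<^sup>2)
                              \<le> g w + ereal (1 / (2 * \<gamma>) * (norm (x - w))\<^sup>2))"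

fun itemA :: "real \<Rightarrow> nat \<Rightarrow> real" where
  "itemA q 0 = 0"
| "itemA q (Suc k) = ((1 + q) * itemA q k + 2 * (1 + sqrt ((1 + itemA q k) * (1 + q * itemA q k)))) / (1 - q)\<^sup>2"

definition itemBeta :: "real \<Rightarrow> nat \<Rightarrow> real" where
  "itemBeta q k = itemA q k / ((1 - q) * itemA q (Suc k))"

definition itemDelta :: "real \<Rightarrow> nat \<Rightarrow> real" where
  "itemDelta q k = sqrt (itemA q (Suc k) / (1 + q * itemA q (Suc k)))"

definition itemSigma :: "real \<Rightarrow> nat \<Rightarrow> real" where
  "itemSigma q k = sqrt ((1 + itemA q k) * (1 + q * itemA q k))"

fun item :: "real \<Rightarrow> real \<Rightarrow> ('a::real_inner \<Rightarrow> 'a) \<Rightarrow> ('a \<Rightarrow> ereal) \<Rightarrow> 'a \<Rightarrow> nat \<Rightarrow> 'a \<times> 'a" where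
  "item L \<mu> gf g x0 0 = (x0, x0)"
| "item L \<mu> gf g x0 (Suc k) =
    (let q = \<mu> / L; (x, z) = item L \<mu> gf g x0 k;
         \<beta> = itemBeta q k; \<delta> = itemDelta q k;
         y = (1 - \<beta>) *\<^sub>R z + \<beta> *\<^sub>R x;
         zb = (1 - q * \<delta>) *\<^sub>R z + (q * \<delta>) *\<^sub>R y - (\<delta> / L) *\<^sub>R gf y;
         z' = prox (\<delta> / L) g zb;
         x' = y - (1 / L) *\<^sub>R gf y - (1 / \<delta>) *\<^sub>R (zb - z')
     in (x', z'))"

definition itemX where "itemX L \<mu> gf g x0 k = fst (item L \<mu> gf g x0 k)"
definition itemZ where "itemZ L \<mu> gf g x0 k = snd (item L \<mu> gf g x0 k)"

definition itemY where
  "itemY L \<mu> gf g x0 k = (1 - itemBeta (\<mu> / L) k) *\<^sub>R itemZ L \<mu> gf g x0 k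
                          + itemBeta (\<mu> / L) k *\<^sub>R itemX L \<mu> gf g x0 k"

text \<open>bar z^{k+1}, indexed by k.\<close>
definition itemZbar where
  "itemZbar L \<mu> gf g x0 k = (let q = \<mu> / L; \<delta> = itemDelta q k; y = itemY L \<mu> gf g x0 k in
     (1 - q * \<delta>) *\<^sub>R itemZ L \<mu> gf g x0 k + (q * \<delta>) *\<^sub>R y - (\<delta> / L) *\<^sub>R gf y)"

text \<open>s_g^k = L / delta_{k-1} (bar z^k - z^k) for k >= 1, and s_g^0 = s_g^1.\<close>
definition itemS where
  "itemS L \<mu> gf g x0 k = (let j = (if k = 0 then 0 else k - 1) in
     (L / itemDelta (\<mu> / L) j) *\<^sub>R (itemZbar L \<mu> gf g x0 j - itemZ L \<mu> gf g x0 (Suc j)))"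

definition If :: "real \<Rightarrow> real \<Rightarrow> ('a::real_inner \<Rightarrow> real) \<Rightarrow> ('a \<Rightarrow> 'a) \<Rightarrow> 'a \<Rightarrow> 'a \<Rightarrow> real" where
  "If L \<mu> f gf x y = f x - f y - inner (gf y) (x - y) - \<mu> / 2 * (norm (x - y))\<^sup>2
     - 1 / (2 * (L - \<mu>)) * (norm (gf x - gf y - \<mu> *\<^sub>R (x - y)))\<^sup>2"

definition Ig :: "('a::real_inner \<Rightarrow> ereal) \<Rightarrow> 'a \<Rightarrow> 'a \<Rightarrow> 'a \<Rightarrow> ereal" where
  "Ig g x y s = g x - g y - ereal (inner s (x - y))"

text \<open>Lyapunov quantity V_k (ereal-valued; ereal has 0 * (+-infinity) = 0).
  The convention y^{-1} = y^0 is realised by truncated subtraction k - 1.\<close>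
definition itemV where
  "itemV L \<mu> f gf g x0 xs k = (let q = \<mu> / L; A = itemA q k;
      y' = itemY L \<mu> gf g x0 (k - 1); z = itemZ L \<mu> gf g x0 k;
      s = itemS L \<mu> gf g x0 k; sstar = - gf xs in
    ereal ((1 - q) * A * If L \<mu> f gf y' xs)
    + ereal (q * A) * Ig g xs z s
    + ereal (q * A + 1 - itemSigma q k) * Ig g z xs sstar
    + ereal (A / (2 * L) * (norm (s - sstar))\<^sup>2)
    + ereal ((L + \<mu> * A) * (norm (z - xs))\<^sup>2))"

end

theory Submission
  imports Defs
begin

text \<open>The subgradient of \<open>g\<close> at \<open>z\<^sup>k\<^sup>+\<^sup>1\<close> produced by the prox step is \<open>s\<^sub>g\<^sup>k\<^sup>+\<^sup>1\<close>, and optimality of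
  \<open>x\<^sup>\<star>\<close> makes \<open>-\<nabla>f(x\<^sup>\<star>)\<close> a subgradient of \<open>g\<close> at \<open>x\<^sup>\<star>\<close>. Substituting the update rules, \<open>V\<^sub>k - V\<^sub>k\<^sub>+\<^sub>1\<close>
  becomes an explicit combination, with nonnegative weights, of interpolation gaps \<open>I\<^sub>f\<close>
  (nonnegative for \<open>\<mu>\<close>-strongly convex \<open>L\<close>-smooth \<open>f\<close>), of subgradient gaps \<open>I\<^sub>g\<close> and of
  squared norms. That identity is pure algebra once the coefficients are linearised by
  \<open>t = 1 / \<delta>\<^sub>k\<close>: then \<open>\<sigma>\<^sub>k - 1 = t A\<^sub>k\<close>, \<open>A\<^sub>k\<^sub>+\<^sub>1 (t\<^sup>2 - q) = 1\<close> and \<open>A\<^sub>k = (1 + q - 2t) A\<^sub>k\<^sub>+\<^sub>1\<close>.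
  The proximal map is well defined because \<open>g + c \<parallel>x - \<cdot>\<parallel>\<^sup>2\<close> is strongly convex, bounded
  below by an affine minorant of \<open>g\<close>, and lower semicontinuous: minimising sequences are
  Cauchy, and their limit is the unique minimiser.\<close>

section \<open>Smooth strongly convex functions\<close>

lemma has_field_derivative_along_line:
  fixes f :: "'a::real_inner \<Rightarrow> real"
  assumes grad: "\<And>x. GDERIV f x :> gf x"
  shows "((\<lambda>t. f (v + t *\<^sub>R d)) has_field_derivative inner d (gf (v + t *\<^sub>R d))) (at t)"
proof -
  have line: "((\<lambda>t. v + t *\<^sub>R d) has_derivative (\<lambda>h. h *\<^sub>R d)) (at t)"
    by (auto intro!: derivative_eq_intros)
  have "(f has_derivative (\<lambda>h. inner h (gf (v + t *\<^sub>R d)))) (at (v + t *\<^sub>R d))"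
    using grad[of "v + t *\<^sub>R d"] by (simp add: gderiv_def)
  from has_derivative_compose[OF line this] show ?thesis
    unfolding has_field_derivative_def by (rule has_derivative_eq_rhs) (auto simp: fun_eq_iff)
qed

lemma strongly_convex_gradient_inequality:
  fixes f :: "'a::real_inner \<Rightarrow> real"
  assumes grad: "\<And>x. GDERIV f x :> gf x" and sc: "strongly_convex \<mu> f"
  shows "f v + inner (gf v) (u - v) + \<mu> / 2 * (norm (u - v))\<^sup>2 \<le> f u"
proof -
  define d where "d = u - v"
  define \<psi> where "\<psi> = (\<lambda>t::real. f (v + t *\<^sub>R d) - \<mu> / 2 * t\<^sup>2 * (norm d)\<^sup>2)"
  have "convex_on UNIV \<psi>"
  proof (rule convex_onI)
    fix t x y :: real
    assume t: "0 < t" "t < 1"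
    have "(1 - t) *\<^sub>R (v + x *\<^sub>R d) + t *\<^sub>R (v + y *\<^sub>R d) = v + ((1 - t) * x + t * y) *\<^sub>R d"
      by (simp add: algebra_simps)
    moreover have "(norm ((v + x *\<^sub>R d) - (v + y *\<^sub>R d)))\<^sup>2 = (x - y)\<^sup>2 * (norm d)\<^sup>2"
      by (simp add: power_mult_distrib flip: scaleR_diff_left)
    ultimately have "f (v + ((1 - t) * x + t * y) *\<^sub>R d)
        \<le> (1 - t) * f (v + x *\<^sub>R d) + t * f (v + y *\<^sub>R d) - \<mu> / 2 * t * (1 - t) * ((x - y)\<^sup>2 * (norm d)\<^sup>2)"
      using sc t unfolding strongly_convex_def by (metis less_eq_real_def)
    moreover have "\<mu> / 2 * ((1 - t) * x + t * y)\<^sup>2 * (norm d)\<^sup>2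
        = (1 - t) * (\<mu> / 2 * x\<^sup>2 * (norm d)\<^sup>2) + t * (\<mu> / 2 * y\<^sup>2 * (norm d)\<^sup>2)
          - \<mu> / 2 * t * (1 - t) * ((x - y)\<^sup>2 * (norm d)\<^sup>2)"
      by (simp add: field_simps power2_eq_square)
    ultimately show "\<psi> ((1 - t) *\<^sub>R x + t *\<^sub>R y) \<le> (1 - t) * \<psi> x + t * \<psi> y"
      unfolding \<psi>_def by (simp add: algebra_simps)
  qed simp
  moreover have "(\<psi> has_field_derivative inner d (gf v)) (at 0)"
    unfolding \<psi>_def
    by (rule derivative_eq_intros has_field_derivative_along_line[OF grad, where t = 0] refl | simp)+
  ultimately have "\<psi> 1 - \<psi> 0 \<ge> inner d (gf v) * (1 - 0)"
    by (intro convex_on_imp_above_tangent) auto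
  then show ?thesis unfolding \<psi>_def d_def by (simp add: inner_commute)
qed

lemma lipschitz_gradient_upper_bound:
  fixes f :: "'a::real_inner \<Rightarrow> real"
  assumes grad: "\<And>x. GDERIV f x :> gf x" and lip: "L-lipschitz_on UNIV gf"
  shows "f u \<le> f v + inner (gf v) (u - v) + L / 2 * (norm (u - v))\<^sup>2"
proof -
  define d where "d = u - v"
  define \<psi> where "\<psi> = (\<lambda>t::real. f (v + t *\<^sub>R d) - t * inner (gf v) d - L / 2 * t\<^sup>2 * (norm d)\<^sup>2)"
  have "\<psi> 1 \<le> \<psi> 0"
  proof (rule DERIV_nonpos_imp_nonincreasing[of 0 1 \<psi>])
    fix t :: real
    assume t: "0 \<le> t" "t \<le> 1"
    have "(\<psi> has_field_derivative inner d (gf (v + t *\<^sub>R d)) - inner (gf v) d - L * t * (norm d)\<^sup>2) (at t)"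
      unfolding \<psi>_def
      by (rule derivative_eq_intros has_field_derivative_along_line[OF grad] refl | simp)+
    moreover have "inner d (gf (v + t *\<^sub>R d)) - inner (gf v) d \<le> L * t * (norm d)\<^sup>2"
    proof -
      have "inner d (gf (v + t *\<^sub>R d)) - inner (gf v) d = inner (gf (v + t *\<^sub>R d) - gf v) d"
        by (simp add: inner_diff_left inner_diff_right inner_commute)
      also have "\<dots> \<le> norm (gf (v + t *\<^sub>R d) - gf v) * norm d"
        by (rule norm_cauchy_schwarz)
      also have "\<dots> \<le> L * norm (t *\<^sub>R d) * norm d"
        using lipschitz_onD[OF lip, of "v + t *\<^sub>R d" v] by (simp add: dist_norm mult_right_mono)
      also have "\<dots> = L * t * (norm d)\<^sup>2"
        using t by (simp add: power2_eq_square)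
      finally show ?thesis .
    qed
    ultimately show "\<exists>y. (\<psi> has_field_derivative y) (at t) \<and> y \<le> 0"
      by auto
  qed simp
  then show ?thesis unfolding \<psi>_def d_def by simp
qed

text \<open>Both bounds are applied at the point
  \<open>w = x - (\<nabla>f x - \<nabla>f y - \<mu> (x - y)) / (L - \<mu>)\<close>: \<open>If L \<mu> f gf x y\<close> is exactly the sum
  of the gap in the descent inequality at \<open>(w, x)\<close> and the gap in the strong convexity
  inequality at \<open>(w, y)\<close>.\<close>
lemma If_nonneg:
  fixes f :: "'a::real_inner \<Rightarrow> real"
  assumes "\<mu> < L" and grad: "\<And>x. GDERIV f x :> gf x"
    and sc: "strongly_convex \<mu> f" and lip: "L-lipschitz_on UNIV gf"
  shows "0 \<le> If L \<mu> f gf x y"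
proof -
  define c where "c = 1 / (L - \<mu>)"
  define D where "D = gf x - gf y - \<mu> *\<^sub>R (x - y)"
  define w where "w = x - c *\<^sub>R D"
  have lower: "f y + inner (gf y) (w - y) + \<mu> / 2 * (norm (w - y))\<^sup>2 \<le> f w"
    by (rule strongly_convex_gradient_inequality[OF grad sc])
  have upper: "f w \<le> f x + inner (gf x) (w - x) + L / 2 * (norm (w - x))\<^sup>2"
    by (rule lipschitz_gradient_upper_bound[OF grad lip])
  have c: "c * c * (L - \<mu>) = c"
    using \<open>\<mu> < L\<close> by (simp add: c_def)
  have wx: "w - x = - (c *\<^sub>R D)" and wy: "w - y = (x - y) - c *\<^sub>R D"
    unfolding w_def by (simp_all add: algebra_simps)
  have "If L \<mu> f gf x y = f x - f y - inner (gf y) (x - y) - \<mu> / 2 * inner (x - y) (x - y) - c / 2 * inner D D"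
    unfolding If_def c_def D_def power2_norm_eq_inner by simp
  moreover have "c * inner D D = c * inner (gf x) D - c * inner (gf y) D - \<mu> * (c * inner (x - y) D)"
    unfolding D_def by (simp add: algebra_simps)
  moreover have "L / 2 * (c * c * inner D D) - \<mu> / 2 * (c * c * inner D D) = c / 2 * inner D D"
    by (subst c[symmetric]) (simp add: algebra_simps)
  ultimately have "If L \<mu> f gf x y = (f x + inner (gf x) (w - x) + L / 2 * (norm (w - x))\<^sup>2 - f w)
      + (f w - (f y + inner (gf y) (w - y) + \<mu> / 2 * (norm (w - y))\<^sup>2))"
    unfolding wx wy power2_norm_eq_inner
    by (simp add: inner_commute algebra_simps) (simp add: field_simps)
  then show ?thesis using lower upper by linarith
qed

lemma If_three_point:
  fixes f :: "'a::real_inner \<Rightarrow> real"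
  shows "If L \<mu> f gf p r - If L \<mu> f gf p y - If L \<mu> f gf y r
    = inner (gf y - gf r - \<mu> *\<^sub>R (y - r)) ((p - y) - (1 / (L - \<mu>)) *\<^sub>R (gf p - gf y - \<mu> *\<^sub>R (p - y)))"
proof -
  define c where "c = 1 / (L - \<mu>)"
  have half: "1 / (2 * (L - \<mu>)) = c / 2"
    unfolding c_def by simp
  show ?thesis
    unfolding If_def half power2_norm_eq_inner c_def[symmetric]
    by (simp add: inner_commute algebra_simps)
qed

lemma If_add_swap:
  fixes f :: "'a::real_inner \<Rightarrow> real"
  shows "If L \<mu> f gf r y + If L \<mu> f gf y r
    = inner (gf y - gf r - \<mu> *\<^sub>R (y - r)) ((y - r) - (1 / (L - \<mu>)) *\<^sub>R (gf y - gf r - \<mu> *\<^sub>R (y - r)))"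
  using If_three_point[of L \<mu> f gf r r y] by (simp add: If_def algebra_simps)

lemma If_weighted_combination:
  fixes f :: "'a::real_inner \<Rightarrow> real" and xs :: 'a
  assumes L: "L \<noteq> 0" and q: "q \<noteq> 1" and \<mu>: "\<mu> = q * L" and \<beta>: "\<beta> * (1 - q) * b = a"
    and y: "y = (1 - \<beta>) *\<^sub>R z + \<beta> *\<^sub>R (ym - (1 / L) *\<^sub>R (gf ym + s))"
  defines "w \<equiv> (1 / L) *\<^sub>R (gf y - gf xs) - q *\<^sub>R (y - xs)"
    and "v \<equiv> (1 / L) *\<^sub>R (s + gf xs)"
  shows "(1 - q) * a * (If L \<mu> f gf ym xs - If L \<mu> f gf ym y - If L \<mu> f gf y xs)
           - (1 - q) * (b - a) * (If L \<mu> f gf xs y + If L \<mu> f gf y xs)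
         = L * inner w (b *\<^sub>R w + a *\<^sub>R v - (b * (1 - q) * (1 - \<beta>)) *\<^sub>R (z - xs))"
proof -
  define \<kappa> where "\<kappa> = 1 / (L - \<mu>)"
  have \<kappa>: "(1 - q) * \<kappa> = 1 / L" "1 / L * \<mu> = q"
    using L q unfolding \<kappa>_def \<mu> by (simp_all add: field_simps)
  have scaled: "((1 - q) * \<alpha>) *\<^sub>R ((p - r) - \<kappa> *\<^sub>R (gf p - gf r - \<mu> *\<^sub>R (p - r)))
      = \<alpha> *\<^sub>R (p - r) - (\<alpha> / L) *\<^sub>R (gf p - gf r)" for \<alpha> p r
  proof -
    have "((1 - q) * \<alpha>) *\<^sub>R ((p - r) - \<kappa> *\<^sub>R (gf p - gf r - \<mu> *\<^sub>R (p - r)))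
      = ((1 - q) * \<alpha>) *\<^sub>R (p - r) - (((1 - q) * \<kappa>) * \<alpha>) *\<^sub>R (gf p - gf r)
        + (((1 - q) * \<kappa> * \<mu>) * \<alpha>) *\<^sub>R (p - r)"
      by (simp add: algebra_simps)
    also have "\<dots> = ((1 - q) * \<alpha>) *\<^sub>R (p - r) - ((1 / L) * \<alpha>) *\<^sub>R (gf p - gf r) + (q * \<alpha>) *\<^sub>R (p - r)"
      unfolding \<kappa> ..
    finally show ?thesis
      by (simp add: algebra_simps)
  qed
  have combined: "a *\<^sub>R (ym - y) - (a / L) *\<^sub>R (gf ym - gf y)
      - ((b - a) *\<^sub>R (y - xs) - ((b - a) / L) *\<^sub>R (gf y - gf xs))
      = b *\<^sub>R w + a *\<^sub>R v - (b * (1 - q) * (1 - \<beta>)) *\<^sub>R (z - xs)"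
  proof -
    have "(b * (1 - q)) *\<^sub>R (y - xs)
        = (b * (1 - q) * (1 - \<beta>)) *\<^sub>R (z - xs) + a *\<^sub>R (ym - (1 / L) *\<^sub>R (gf ym + s) - xs)"
      unfolding y \<beta>[symmetric] by (simp add: algebra_simps)
    then show ?thesis
      unfolding w_def v_def by (simp add: algebra_simps diff_divide_distrib)
  qed
  have "(1 - q) * a * (If L \<mu> f gf ym xs - If L \<mu> f gf ym y - If L \<mu> f gf y xs)
        - (1 - q) * (b - a) * (If L \<mu> f gf xs y + If L \<mu> f gf y xs)
      = inner (gf y - gf xs - \<mu> *\<^sub>R (y - xs))
          (((1 - q) * a) *\<^sub>R ((ym - y) - \<kappa> *\<^sub>R (gf ym - gf y - \<mu> *\<^sub>R (ym - y)))
           - ((1 - q) * (b - a)) *\<^sub>R ((y - xs) - \<kappa> *\<^sub>R (gf y - gf xs - \<mu> *\<^sub>R (y - xs))))"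
    unfolding If_three_point If_add_swap \<kappa>_def[symmetric] by (simp add: inner_diff_right)
  also have "\<dots> = inner (gf y - gf xs - \<mu> *\<^sub>R (y - xs)) (b *\<^sub>R w + a *\<^sub>R v - (b * (1 - q) * (1 - \<beta>)) *\<^sub>R (z - xs))"
    unfolding scaled combined ..
  also have "gf y - gf xs - \<mu> *\<^sub>R (y - xs) = L *\<^sub>R w"
    unfolding w_def \<mu> using L by (simp add: algebra_simps)
  finally show ?thesis
    by simp
qed

section \<open>Convex extended-valued functions and the proximal map\<close>

lemma ext_proper_finite:
  assumes "ext_proper g" and "g u \<noteq> \<infinity>"
  shows "g u = ereal (real_of_ereal (g u))"
  using assms unfolding ext_proper_def by (cases "g u") auto

lemma ext_convex_combination:
  fixes g :: "'a::real_vector \<Rightarrow> ereal"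
  assumes cv: "ext_convex g" and pr: "ext_proper g" and u: "g u \<noteq> \<infinity>" and v: "g v \<noteq> \<infinity>"
    and t: "0 \<le> t" "t \<le> 1"
  shows "g ((1 - t) *\<^sub>R u + t *\<^sub>R v) \<noteq> \<infinity>"
    and "real_of_ereal (g ((1 - t) *\<^sub>R u + t *\<^sub>R v))
           \<le> (1 - t) * real_of_ereal (g u) + t * real_of_ereal (g v)"
proof -
  have "g ((1 - t) *\<^sub>R u + t *\<^sub>R v) \<le> ereal (1 - t) * g u + ereal t * g v"
    using cv t unfolding ext_convex_def by blast
  also have "\<dots> = ereal ((1 - t) * real_of_ereal (g u) + t * real_of_ereal (g v))"
    by (subst ext_proper_finite[OF pr u], subst ext_proper_finite[OF pr v]) simp
  finally have le: "g ((1 - t) *\<^sub>R u + t *\<^sub>R v) \<le> ereal ((1 - t) * real_of_ereal (g u) + t * real_of_ereal (g v))" .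
  then show "g ((1 - t) *\<^sub>R u + t *\<^sub>R v) \<noteq> \<infinity>"
    by auto
  moreover have "g ((1 - t) *\<^sub>R u + t *\<^sub>R v) \<noteq> - \<infinity>"
    using pr unfolding ext_proper_def by blast
  ultimately show "real_of_ereal (g ((1 - t) *\<^sub>R u + t *\<^sub>R v))
      \<le> (1 - t) * real_of_ereal (g u) + t * real_of_ereal (g v)"
    using le by (cases "g ((1 - t) *\<^sub>R u + t *\<^sub>R v)") auto
qed

lemma le_of_forall_pos_minus_mult_le:
  fixes a b c :: real
  assumes "\<And>t. 0 < t \<Longrightarrow> t \<le> 1 \<Longrightarrow> a - t * c \<le> b"
  shows "a \<le> b"
proof (rule tendsto_upperbound)
  show "((\<lambda>t. a - t * c) \<longlongrightarrow> a) (at_right 0)"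
    by (auto intro!: tendsto_eq_intros)
  show "\<forall>\<^sub>F t in at_right 0. a - t * c \<le> b"
    using eventually_at_right_real[OF zero_less_one] by eventually_elim (simp add: assms)
qed simp

lemma ext_convex_minimizer_subgradient:
  fixes g :: "'a::real_inner \<Rightarrow> ereal" and \<phi> :: "'a \<Rightarrow> real"
  assumes cv: "ext_convex g" and pr: "ext_proper g" and gp: "g p \<noteq> \<infinity>"
    and min: "\<And>w. g p + ereal (\<phi> p) \<le> g w + ereal (\<phi> w)"
    and model: "\<And>t. 0 < t \<Longrightarrow> t \<le> 1 \<Longrightarrow>
                  \<phi> ((1 - t) *\<^sub>R p + t *\<^sub>R w) \<le> \<phi> p + t * inner v (w - p) + t\<^sup>2 * C"
  shows "g p + ereal (inner (- v) (w - p)) \<le> g w"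
proof (cases "g w = \<infinity>")
  case False
  define gr where "gr = (\<lambda>w. real_of_ereal (g w))"
  have fin: "\<And>w. g w \<noteq> \<infinity> \<Longrightarrow> g w = ereal (gr w)"
    using ext_proper_finite[OF pr] unfolding gr_def by auto
  have "gr p - inner v (w - p) - t * C \<le> gr w" if t: "0 < t" "t \<le> 1" for t
  proof -
    define wt where "wt = (1 - t) *\<^sub>R p + t *\<^sub>R w"
    have gwt: "g wt \<noteq> \<infinity>" and conv: "gr wt \<le> (1 - t) * gr p + t * gr w"
      using ext_convex_combination[OF cv pr gp False, of t] t unfolding wt_def gr_def by auto
    have "gr p + \<phi> p \<le> gr wt + \<phi> wt"
      using min[of wt] fin[OF gp] fin[OF gwt] by simp
    with conv model[OF t] have "t * (gr p - inner v (w - p) - t * C) \<le> t * gr w"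
      unfolding wt_def by (simp add: algebra_simps power2_eq_square)
    then show ?thesis
      using t by simp
  qed
  then have "gr p - inner v (w - p) \<le> gr w"
    by (rule le_of_forall_pos_minus_mult_le)
  then show ?thesis
    using fin[OF gp] fin[OF False] by simp
qed simp

lemma composite_minimizer_subgradient:
  fixes f :: "'a::real_inner \<Rightarrow> real" and g :: "'a \<Rightarrow> ereal"
  assumes grad: "\<And>x. GDERIV f x :> gf x" and lip: "L-lipschitz_on UNIV gf"
    and cv: "ext_convex g" and pr: "ext_proper g"
    and opt: "\<And>x. ereal (f xs) + g xs \<le> ereal (f x) + g x"
  shows "g xs \<noteq> \<infinity>" and "g xs + ereal (inner (- gf xs) (w - xs)) \<le> g w"
proof -
  obtain w0 where w0: "g w0 \<noteq> \<infinity>"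
    using pr unfolding ext_proper_def by blast
  have "ereal (f xs) + g xs \<le> ereal (f w0) + g w0"
    by (rule opt)
  then show gxs: "g xs \<noteq> \<infinity>"
    using w0 by auto
  show "g xs + ereal (inner (- gf xs) (w - xs)) \<le> g w"
  proof (rule ext_convex_minimizer_subgradient[OF cv pr gxs])
    show "g xs + ereal (f xs) \<le> g w + ereal (f w)" for w
      using opt[of w] by (simp add: add.commute)
    fix t :: real
    assume "0 < t"
    have step: "(1 - t) *\<^sub>R xs + t *\<^sub>R w - xs = t *\<^sub>R (w - xs)"
      by (simp add: algebra_simps)
    have "(norm (t *\<^sub>R (w - xs)))\<^sup>2 = t\<^sup>2 * (norm (w - xs))\<^sup>2"
      using \<open>0 < t\<close> by (simp add: power_mult_distrib)
    then show "f ((1 - t) *\<^sub>R xs + t *\<^sub>R w) \<le> f xs + t * inner (gf xs) (w - xs) + t\<^sup>2 * (L / 2 * (norm (w - xs))\<^sup>2)"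
      using lipschitz_gradient_upper_bound[OF grad lip, of "(1 - t) *\<^sub>R xs + t *\<^sub>R w" xs]
      unfolding step by (simp add: algebra_simps)
  qed
qed

text \<open>Convexity along the segment from \<open>w0\<close> to \<open>w\<close> transports the bound from the point of
  the segment at distance \<open>r / 2\<close> from \<open>w0\<close>.\<close>
lemma ext_convex_lower_bound_from_ball:
  fixes g :: "'a::real_normed_vector \<Rightarrow> ereal"
  assumes cv: "ext_convex g" and pr: "ext_proper g" and w0: "g w0 = ereal (m + 1)" and r: "0 < r"
    and near: "\<And>w. norm (w - w0) < r \<Longrightarrow> ereal m < g w"
  shows "ereal (m - 2 / r * norm (w - w0)) \<le> g w"
proof (cases "norm (w - w0) < r")
  case True
  have "ereal (m - 2 / r * norm (w - w0)) \<le> ereal m"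
    using r by simp
  then show ?thesis
    using near[OF True] by (meson less_imp_le order_trans)
next
  case far: False
  show ?thesis
  proof (cases "g w = \<infinity>")
    case False
    define t where "t = r / (2 * norm (w - w0))"
    have npos: "0 < norm (w - w0)"
      using far r by linarith
    have t: "0 < t" "t \<le> 1"
      using far npos r by (auto simp: t_def field_simps)
    have "(1 - t) *\<^sub>R w0 + t *\<^sub>R w - w0 = t *\<^sub>R (w - w0)"
      by (simp add: algebra_simps)
    then have "norm ((1 - t) *\<^sub>R w0 + t *\<^sub>R w - w0) = r / 2"
      using npos r by (simp add: t_def)
    then have "ereal m < g ((1 - t) *\<^sub>R w0 + t *\<^sub>R w)"
      using r by (intro near) simp
    moreover have "g w0 \<noteq> \<infinity>"
      using w0 by simp
    note conv = ext_convex_combination[OF cv pr this False less_imp_le[OF t(1)] t(2)]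
    ultimately have "m < real_of_ereal (g ((1 - t) *\<^sub>R w0 + t *\<^sub>R w))"
      by (subst (asm) ext_proper_finite[OF pr conv(1)]) simp
    then have "m < (1 - t) * (m + 1) + t * real_of_ereal (g w)"
      using conv(2) w0 by simp
    then have "m + 1 - 1 / t < real_of_ereal (g w)"
      using t(1) by (simp add: field_simps)
    moreover have "1 / t = 2 / r * norm (w - w0)"
      using npos r by (simp add: t_def)
    ultimately show ?thesis
      by (subst ext_proper_finite[OF pr False]) simp
  qed simp
qed

lemma ext_convex_lsc_lower_bound:
  fixes g :: "'a::real_normed_vector \<Rightarrow> ereal"
  assumes cv: "ext_convex g" and pr: "ext_proper g" and lsc: "ext_lsc g"
  obtains a b where "\<And>w. ereal (a - b * norm w) \<le> g w" and "0 \<le> b"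
proof -
  obtain w0 where "g w0 \<noteq> \<infinity>"
    using pr unfolding ext_proper_def by blast
  define m where "m = real_of_ereal (g w0) - 1"
  have w0: "g w0 = ereal (m + 1)"
    using ext_proper_finite[OF pr \<open>g w0 \<noteq> \<infinity>\<close>] by (simp add: m_def)
  have "open (- {w. g w \<le> ereal m})"
    using lsc unfolding ext_lsc_def by blast
  moreover have "w0 \<in> - {w. g w \<le> ereal m}"
    using w0 by simp
  ultimately obtain r where r: "0 < r" "ball w0 r \<subseteq> - {w. g w \<le> ereal m}"
    using open_contains_ball by blast
  have near: "ereal m < g w" if "norm (w - w0) < r" for w
    using r(2) that by (auto simp: dist_norm norm_minus_commute)
  show thesis
  proof (rule that[of "m - 2 / r * norm w0" "2 / r"])
    show "0 \<le> 2 / r"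
      using r(1) by simp
  next
    fix w
    have "2 / r * norm (w - w0) \<le> 2 / r * (norm w + norm w0)"
      using r(1) norm_triangle_ineq4[of w w0] by (intro mult_left_mono) auto
    then have "m - 2 / r * norm w0 - 2 / r * norm w \<le> m - 2 / r * norm (w - w0)"
      by (simp add: distrib_left)
    then show "ereal (m - 2 / r * norm w0 - 2 / r * norm w) \<le> g w"
      using ext_convex_lower_bound_from_ball[OF cv pr w0 r(1) near, of w]
      by (meson ereal_less_eq(3) order_trans)
  qed
qed

lemma ext_lsc_sequentially:
  assumes lsc: "ext_lsc g" and lim: "ws \<longlonglongrightarrow> p" and h: "h \<longlonglongrightarrow> l"
    and le: "\<And>n. g (ws n) \<le> ereal (h n)"
  shows "g p \<le> ereal l"
proof (rule ereal_le_epsilon2)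
  fix e :: real
  assume "0 < e"
  have "\<forall>\<^sub>F n in sequentially. h n < l + e"
    using h \<open>0 < e\<close> by (intro order_tendstoD(2)) auto
  then have "\<forall>\<^sub>F n in sequentially. ws n \<in> {w. g w \<le> ereal (l + e)}"
    by eventually_elim (auto intro: order_trans[OF le])
  moreover have "closed {w. g w \<le> ereal (l + e)}"
    using lsc unfolding ext_lsc_def by blast
  ultimately have "p \<in> {w. g w \<le> ereal (l + e)}"
    using lim by (intro Lim_in_closed_set) auto
  then show "g p \<le> ereal l + ereal e"
    by simp
qed

lemma norm_diff_midpoint_power2:
  fixes x u v :: "'a::real_inner"
  shows "(norm (x - ((1/2) *\<^sub>R u + (1/2) *\<^sub>R v)))\<^sup>2
       = (norm (x - u))\<^sup>2 / 2 + (norm (x - v))\<^sup>2 / 2 - (norm (u - v))\<^sup>2 / 4"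
  unfolding power2_norm_eq_inner
  by (simp add: inner_commute algebra_simps) (simp add: field_simps)

lemma ext_convex_midpoint_quadratic:
  fixes g :: "'a::real_inner \<Rightarrow> ereal"
  assumes cv: "ext_convex g" and pr: "ext_proper g" and u: "g u \<noteq> \<infinity>" and v: "g v \<noteq> \<infinity>"
  shows "g ((1/2) *\<^sub>R u + (1/2) *\<^sub>R v) \<noteq> \<infinity>"
    and "real_of_ereal (g ((1/2) *\<^sub>R u + (1/2) *\<^sub>R v)) + c * (norm (x - ((1/2) *\<^sub>R u + (1/2) *\<^sub>R v)))\<^sup>2
       \<le> ((real_of_ereal (g u) + c * (norm (x - u))\<^sup>2) + (real_of_ereal (g v) + c * (norm (x - v))\<^sup>2)) / 2
          - c / 4 * (norm (u - v))\<^sup>2"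
  using ext_convex_combination[OF cv pr u v, of "1/2"]
  by (auto simp: norm_diff_midpoint_power2 algebra_simps)

lemma Cauchy_of_midpoint_gap:
  fixes ws :: "nat \<Rightarrow> 'a::real_normed_vector"
  assumes c: "0 < c" and e: "e \<longlonglongrightarrow> 0"
    and gap: "\<And>i j. c / 4 * (norm (ws i - ws j))\<^sup>2 \<le> (e i + e j) / 2"
  shows "Cauchy ws"
proof (rule CauchyI)
  fix \<epsilon> :: real
  assume "0 < \<epsilon>"
  then have "\<forall>\<^sub>F n in sequentially. e n < c * \<epsilon>\<^sup>2 / 4"
    using c by (intro order_tendstoD(2)[OF e]) simp
  then obtain M where M: "\<And>n. M \<le> n \<Longrightarrow> e n < c * \<epsilon>\<^sup>2 / 4"
    unfolding eventually_sequentially by blast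
  have "norm (ws i - ws j) < \<epsilon>" if "M \<le> i" "M \<le> j" for i j
  proof -
    have "c * (norm (ws i - ws j))\<^sup>2 < c * \<epsilon>\<^sup>2"
      using gap[of i j] M[OF that(1)] M[OF that(2)] by simp
    then have "(norm (ws i - ws j))\<^sup>2 < \<epsilon>\<^sup>2"
      using c by simp
    then show ?thesis
      using \<open>0 < \<epsilon>\<close> by (simp add: power2_less_imp_less)
  qed
  then show "\<exists>M. \<forall>i\<ge>M. \<forall>j\<ge>M. norm (ws i - ws j) < \<epsilon>"
    by blast
qed

lemma mult_le_quadratic:
  fixes b c s :: real
  assumes "0 < c"
  shows "b * s \<le> c * s\<^sup>2 + b\<^sup>2 / (4 * c)"
proof -
  have "0 \<le> (2 * c * s - b)\<^sup>2 / (4 * c)"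
    using assms by simp
  also have "\<dots> = c * s\<^sup>2 + b\<^sup>2 / (4 * c) - b * s"
    using assms by (simp add: power2_eq_square field_simps)
  finally show ?thesis
    by simp
qed

lemma ext_convex_quadratic_lower_bound:
  fixes g :: "'a::real_inner \<Rightarrow> ereal"
  assumes cv: "ext_convex g" and pr: "ext_proper g" and lsc: "ext_lsc g" and c: "0 < c"
  obtains M where "\<And>w. ereal M \<le> g w + ereal (c * (norm (x - w))\<^sup>2)"
proof -
  obtain a b where ab: "\<And>w. ereal (a - b * norm w) \<le> g w" and b: "0 \<le> b"
    using ext_convex_lsc_lower_bound[OF cv pr lsc] by metis
  have "ereal (a - b * norm x - b\<^sup>2 / (4 * c)) \<le> g w + ereal (c * (norm (x - w))\<^sup>2)" for w
  proof -
    have "b * norm w \<le> b * norm x + b * norm (x - w)"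
      using b norm_triangle_ineq4[of x "x - w"] by (simp add: mult_left_mono flip: distrib_left)
    moreover have "b * norm (x - w) \<le> c * (norm (x - w))\<^sup>2 + b\<^sup>2 / (4 * c)"
      using c by (rule mult_le_quadratic)
    ultimately have "ereal (a - b * norm x - b\<^sup>2 / (4 * c)) \<le> ereal (a - b * norm w) + ereal (c * (norm (x - w))\<^sup>2)"
      by simp
    also have "\<dots> \<le> g w + ereal (c * (norm (x - w))\<^sup>2)"
      by (rule add_right_mono[OF ab])
    finally show ?thesis .
  qed
  then show thesis
    by (rule that)
qed

lemma minimizing_sequence_exists:
  fixes \<phi> :: "'a \<Rightarrow> real"
  assumes "D \<noteq> {}" and "bdd_below (\<phi> ` D)"
  obtains ws where "\<And>n. ws n \<in> D" and "(\<lambda>n. \<phi> (ws n)) \<longlonglongrightarrow> Inf (\<phi> ` D)"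
proof -
  have "Inf (\<phi> ` D) \<in> closure (\<phi> ` D)"
    using assms by (intro closure_contains_Inf) auto
  then obtain u where u: "\<And>n. u n \<in> \<phi> ` D" and lim: "u \<longlonglongrightarrow> Inf (\<phi> ` D)"
    unfolding closure_sequential by blast
  have "\<forall>n. \<exists>w. w \<in> D \<and> u n = \<phi> w"
    using u by blast
  then obtain ws where ws: "\<And>n. ws n \<in> D" and "\<And>n. u n = \<phi> (ws n)"
    by metis
  then have "u = (\<lambda>n. \<phi> (ws n))"
    by auto
  with lim show thesis
    using that[OF ws] by simp
qed

text \<open>The quadratic term makes the objective strongly convex, which forces minimising
  sequences to be Cauchy.\<close>
lemma ext_convex_quadratic_minimizing_Cauchy:
  fixes g :: "'a::real_inner \<Rightarrow> ereal" and ws :: "nat \<Rightarrow> 'a" and c m :: real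
  assumes cv: "ext_convex g" and pr: "ext_proper g" and c: "0 < c"
    and ws: "\<And>n. g (ws n) \<noteq> \<infinity>"
    and m: "\<And>w. g w \<noteq> \<infinity> \<Longrightarrow> m \<le> real_of_ereal (g w) + c * (norm (x - w))\<^sup>2"
    and lim: "(\<lambda>n. real_of_ereal (g (ws n)) + c * (norm (x - ws n))\<^sup>2) \<longlonglongrightarrow> m"
  shows "Cauchy ws"
proof (rule Cauchy_of_midpoint_gap[OF c])
  show "(\<lambda>n. real_of_ereal (g (ws n)) + c * (norm (x - ws n))\<^sup>2 - m) \<longlonglongrightarrow> 0"
    using tendsto_diff[OF lim tendsto_const[of m]] by simp
  fix i j
  have "m \<le> real_of_ereal (g ((1/2) *\<^sub>R ws i + (1/2) *\<^sub>R ws j))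
      + c * (norm (x - ((1/2) *\<^sub>R ws i + (1/2) *\<^sub>R ws j)))\<^sup>2"
    by (rule m[OF ext_convex_midpoint_quadratic(1)[OF cv pr ws[of i] ws[of j]]])
  then show "c / 4 * (norm (ws i - ws j))\<^sup>2
      \<le> ((real_of_ereal (g (ws i)) + c * (norm (x - ws i))\<^sup>2 - m)
          + (real_of_ereal (g (ws j)) + c * (norm (x - ws j))\<^sup>2 - m)) / 2"
    using ext_convex_midpoint_quadratic(2)[OF cv pr ws[of i] ws[of j], of c x] by argo
qed

lemma ext_convex_quadratic_minimizer_exists:
  fixes g :: "'a::{real_inner,complete_space} \<Rightarrow> ereal"
  assumes cv: "ext_convex g" and pr: "ext_proper g" and lsc: "ext_lsc g" and c: "0 < c"
  obtains p where "g p \<noteq> \<infinity>"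
    and "\<And>w. g p + ereal (c * (norm (x - p))\<^sup>2) \<le> g w + ereal (c * (norm (x - w))\<^sup>2)"
proof -
  define gr where "gr = (\<lambda>w. real_of_ereal (g w))"
  define D where "D = {w. g w \<noteq> \<infinity>}"
  define \<phi> where "\<phi> = (\<lambda>w. gr w + c * (norm (x - w))\<^sup>2)"
  have fin: "\<And>w. w \<in> D \<Longrightarrow> g w = ereal (gr w)"
    using ext_proper_finite[OF pr] unfolding D_def gr_def by auto
  obtain M where M: "\<And>w. ereal M \<le> g w + ereal (c * (norm (x - w))\<^sup>2)"
    using ext_convex_quadratic_lower_bound[OF cv pr lsc c] by metis
  have "M \<le> \<phi> w" if "w \<in> D" for w
    using M[of w] fin[OF that] unfolding \<phi>_def by simp
  then have bdd: "bdd_below (\<phi> ` D)"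
    by (intro bdd_belowI2)
  have "D \<noteq> {}"
    using pr unfolding ext_proper_def D_def by blast
  define m where "m = Inf (\<phi> ` D)"
  have m_le: "m \<le> \<phi> w" if "w \<in> D" for w
    unfolding m_def using that bdd by (intro cInf_lower) auto
  obtain ws where ws: "\<And>n. ws n \<in> D" and \<phi>_ws: "(\<lambda>n. \<phi> (ws n)) \<longlonglongrightarrow> m"
    using minimizing_sequence_exists[OF \<open>D \<noteq> {}\<close> bdd] unfolding m_def by metis
  have "Cauchy ws"
    using ws m_le \<phi>_ws unfolding \<phi>_def gr_def D_def
    by (intro ext_convex_quadratic_minimizing_Cauchy[OF cv pr c]) auto
  then obtain p where lim: "ws \<longlonglongrightarrow> p"
    using Cauchy_convergent convergent_def by blast
  have "g p \<le> ereal (m - c * (norm (x - p))\<^sup>2)"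
  proof (rule ext_lsc_sequentially[OF lsc lim])
    show "(\<lambda>n. \<phi> (ws n) - c * (norm (x - ws n))\<^sup>2) \<longlonglongrightarrow> m - c * (norm (x - p))\<^sup>2"
      by (intro tendsto_intros \<phi>_ws lim)
    show "g (ws n) \<le> ereal (\<phi> (ws n) - c * (norm (x - ws n))\<^sup>2)" for n
      using fin[OF ws] unfolding \<phi>_def by simp
  qed
  then have p: "p \<in> D"
    unfolding D_def by auto
  with \<open>g p \<le> ereal (m - c * (norm (x - p))\<^sup>2)\<close> have "\<phi> p \<le> m"
    using fin[OF p] unfolding \<phi>_def by simp
  show thesis
  proof (rule that)
    show "g p \<noteq> \<infinity>"
      using p unfolding D_def by simp
    show "g p + ereal (c * (norm (x - p))\<^sup>2) \<le> g w + ereal (c * (norm (x - w))\<^sup>2)" for w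
    proof (cases "w \<in> D")
      case True
      then show ?thesis
        using \<open>\<phi> p \<le> m\<close> m_le[OF True] fin[OF p] fin[OF True] unfolding \<phi>_def by simp
    qed (simp add: D_def)
  qed
qed

lemma ext_convex_quadratic_minimizer_unique:
  fixes g :: "'a::real_inner \<Rightarrow> ereal"
  assumes cv: "ext_convex g" and pr: "ext_proper g" and c: "0 < c"
    and gp: "g p \<noteq> \<infinity>"
    and p: "\<And>w. g p + ereal (c * (norm (x - p))\<^sup>2) \<le> g w + ereal (c * (norm (x - w))\<^sup>2)"
    and z: "\<And>w. g z + ereal (c * (norm (x - z))\<^sup>2) \<le> g w + ereal (c * (norm (x - w))\<^sup>2)"
  shows "z = p"
proof -
  define gr where "gr = (\<lambda>w. real_of_ereal (g w))"
  have fin: "\<And>w. g w \<noteq> \<infinity> \<Longrightarrow> g w = ereal (gr w)"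
    using ext_proper_finite[OF pr] unfolding gr_def by auto
  have gz: "g z \<noteq> \<infinity>"
    using z[of p] gp by auto
  define mid where "mid = (1/2) *\<^sub>R z + (1/2) *\<^sub>R p"
  have gmid: "g mid \<noteq> \<infinity>"
    unfolding mid_def by (rule ext_convex_midpoint_quadratic(1)[OF cv pr gz gp])
  have "gr p + c * (norm (x - p))\<^sup>2 \<le> gr mid + c * (norm (x - mid))\<^sup>2"
    using p[of mid] fin[OF gp] fin[OF gmid] by simp
  moreover have "gr z + c * (norm (x - z))\<^sup>2 \<le> gr p + c * (norm (x - p))\<^sup>2"
    using z[of p] fin[OF gp] fin[OF gz] by simp
  moreover have "gr mid + c * (norm (x - mid))\<^sup>2
      \<le> ((gr z + c * (norm (x - z))\<^sup>2) + (gr p + c * (norm (x - p))\<^sup>2)) / 2 - c / 4 * (norm (z - p))\<^sup>2"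
    unfolding mid_def gr_def by (rule ext_convex_midpoint_quadratic(2)[OF cv pr gz gp])
  ultimately have "c / 4 * (norm (z - p))\<^sup>2 \<le> 0"
    by argo
  then show ?thesis
    using c by (simp add: mult_le_0_iff)
qed

lemma prox_minimizes:
  fixes g :: "'a::{real_inner,complete_space} \<Rightarrow> ereal"
  assumes cv: "ext_convex g" and pr: "ext_proper g" and lsc: "ext_lsc g" and \<gamma>: "0 < \<gamma>"
  shows "g (prox \<gamma> g x) \<noteq> \<infinity>"
    and "g (prox \<gamma> g x) + ereal (1 / (2 * \<gamma>) * (norm (x - prox \<gamma> g x))\<^sup>2)
           \<le> g w + ereal (1 / (2 * \<gamma>) * (norm (x - w))\<^sup>2)"
proof -
  have c: "0 < 1 / (2 * \<gamma>)"
    using \<gamma> by simp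
  obtain p where gp: "g p \<noteq> \<infinity>"
    and p: "\<And>w. g p + ereal (1 / (2 * \<gamma>) * (norm (x - p))\<^sup>2) \<le> g w + ereal (1 / (2 * \<gamma>) * (norm (x - w))\<^sup>2)"
    using ext_convex_quadratic_minimizer_exists[OF cv pr lsc c] by blast
  have "prox \<gamma> g x = p"
    unfolding prox_def
    by (rule the_equality) (use p ext_convex_quadratic_minimizer_unique[OF cv pr c gp p] in auto)
  then show "g (prox \<gamma> g x) \<noteq> \<infinity>"
    and "g (prox \<gamma> g x) + ereal (1 / (2 * \<gamma>) * (norm (x - prox \<gamma> g x))\<^sup>2)
           \<le> g w + ereal (1 / (2 * \<gamma>) * (norm (x - w))\<^sup>2)"
    using gp p by auto
qed

lemma prox_subgradient:
  fixes g :: "'a::{real_inner,complete_space} \<Rightarrow> ereal"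
  assumes cv: "ext_convex g" and pr: "ext_proper g" and lsc: "ext_lsc g" and \<gamma>: "0 < \<gamma>"
  shows "g (prox \<gamma> g x) + ereal (inner ((1 / \<gamma>) *\<^sub>R (x - prox \<gamma> g x)) (w - prox \<gamma> g x)) \<le> g w"
proof -
  define p where "p = prox \<gamma> g x"
  define c where "c = 1 / (2 * \<gamma>)"
  have "g p + ereal (inner (- (- ((2 * c) *\<^sub>R (x - p)))) (w - p)) \<le> g w"
  proof (rule ext_convex_minimizer_subgradient[OF cv pr, where \<phi> = "\<lambda>w. c * (norm (x - w))\<^sup>2"
        and C = "c * (norm (w - p))\<^sup>2"])
    show "g p \<noteq> \<infinity>"
      unfolding p_def by (rule prox_minimizes(1)[OF cv pr lsc \<gamma>])
    show "g p + ereal (c * (norm (x - p))\<^sup>2) \<le> g u + ereal (c * (norm (x - u))\<^sup>2)" for u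
      unfolding p_def c_def by (rule prox_minimizes(2)[OF cv pr lsc \<gamma>])
    fix t :: real
    have "x - ((1 - t) *\<^sub>R p + t *\<^sub>R w) = (x - p) - t *\<^sub>R (w - p)"
      by (simp add: algebra_simps)
    then show "c * (norm (x - ((1 - t) *\<^sub>R p + t *\<^sub>R w)))\<^sup>2
        \<le> c * (norm (x - p))\<^sup>2 + t * inner (- ((2 * c) *\<^sub>R (x - p))) (w - p) + t\<^sup>2 * (c * (norm (w - p))\<^sup>2)"
      unfolding power2_norm_eq_inner
      by (simp add: inner_commute algebra_simps power2_eq_square)
  qed
  then show ?thesis
    using \<gamma> by (simp add: p_def c_def)
qed

section \<open>The Prox-ITEM coefficients and iterates\<close>

lemma itemA_nonneg:
  assumes "0 \<le> q"
  shows "0 \<le> itemA q k"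
proof (induction k)
  case (Suc k)
  then have "0 \<le> (1 + q) * itemA q k + 2 * (1 + sqrt ((1 + itemA q k) * (1 + q * itemA q k)))"
    using assms by (intro add_nonneg_nonneg mult_nonneg_nonneg) auto
  then show ?case
    by simp
qed simp

lemma itemA_le_Suc:
  assumes "0 < q" and "q < 1"
  shows "itemA q k \<le> itemA q (Suc k)"
proof -
  define a where "a = itemA q k"
  have a: "0 \<le> a"
    using assms by (simp add: a_def itemA_nonneg)
  have "(1 - q)\<^sup>2 * itemA q (Suc k) = (1 + q) * a + 2 * (1 + sqrt ((1 + a) * (1 + q * a)))"
    using assms by (simp add: a_def)
  moreover have "(1 - q)\<^sup>2 * a \<le> (1 + q) * a"
    using a assms by (intro mult_right_mono) (auto simp: power2_eq_square algebra_simps)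
  moreover have "0 \<le> sqrt ((1 + a) * (1 + q * a))"
    using a assms by simp
  ultimately have "(1 - q)\<^sup>2 * a \<le> (1 - q)\<^sup>2 * itemA q (Suc k)"
    by argo
  then show ?thesis
    unfolding a_def by (rule mult_left_le_imp_le) (use assms in simp)
qed

text \<open>The substitution \<open>t = (1 + q + q a) / (1 + \<sigma>)\<close>, which will turn out to be \<open>1 / \<delta>\<close>,
  linearises the recursion of the coefficients.\<close>
lemma itemSigma_parametrisation:
  fixes q a :: real
  assumes q: "0 < q" and a: "0 \<le> a"
    and \<sigma>: "\<sigma> = sqrt ((1 + a) * (1 + q * a))" and t: "t = (1 + q + q * a) / (1 + \<sigma>)"
  shows "1 \<le> \<sigma>" and "0 < t" and "\<sigma> - 1 = t * a" and "a * (t\<^sup>2 - q) = 1 + q - 2 * t"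
proof -
  have \<sigma>2: "\<sigma>\<^sup>2 = (1 + a) * (1 + q * a)"
    unfolding \<sigma> using q a by simp
  have "1 \<le> (1 + a) * (1 + q * a)"
    using q a by (simp add: algebra_simps)
  then show \<sigma>1: "1 \<le> \<sigma>"
    unfolding \<sigma> by (metis real_sqrt_le_mono real_sqrt_one)
  have "0 < 1 + q + q * a"
    using q a by (simp add: add_pos_nonneg)
  then show "0 < t"
    unfolding t using \<sigma>1 by simp
  have t\<sigma>: "t * (1 + \<sigma>) = 1 + q + q * a"
    unfolding t using \<sigma>1 by simp
  have "(\<sigma> - 1) * (\<sigma> + 1) = (t * a) * (\<sigma> + 1)"
    using \<sigma>2 t\<sigma> by (simp add: algebra_simps power2_eq_square)
  then show \<sigma>t: "\<sigma> - 1 = t * a"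
    using \<sigma>1 by simp
  show "a * (t\<^sup>2 - q) = 1 + q - 2 * t"
  proof (cases "a = 0")
    case True
    then show ?thesis
      using t\<sigma> \<sigma> by simp
  next
    case False
    have "(1 + t * a)\<^sup>2 = (1 + a) * (1 + q * a)"
      using \<sigma>t \<sigma>2 by (metis add.commute diff_add_cancel)
    then have "a * (a * (t\<^sup>2 - q) - (1 + q - 2 * t)) = 0"
      by (simp add: algebra_simps power2_eq_square)
    then show ?thesis
      using False by simp
  qed
qed

lemma itemA_Suc_parametrisation:
  fixes q a :: real
  assumes q: "0 < q" "q < 1" and a: "0 \<le> a"
    and \<sigma>: "\<sigma> = sqrt ((1 + a) * (1 + q * a))"
    and b: "b = ((1 + q) * a + 2 * (1 + \<sigma>)) / (1 - q)\<^sup>2"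
    and t: "t = (1 + q + q * a) / (1 + \<sigma>)"
  shows "b * (t\<^sup>2 - q) = 1" and "a = (1 + q - 2 * t) * b" and "0 < b"
proof -
  note par = itemSigma_parametrisation[OF q(1) a \<sigma> t]
  have "b * (1 - q)\<^sup>2 = (1 + q) * a + 2 * (1 + \<sigma>)"
    unfolding b using q by simp
  then have e: "b * (1 - q)\<^sup>2 = (1 + q) * a + 4 + 2 * t * a"
    using par(3) by (simp add: algebra_simps)
  have "b * (t\<^sup>2 - q) * (1 - q)\<^sup>2 = (b * (1 - q)\<^sup>2) * (t\<^sup>2 - q)"
    by (simp only: ac_simps)
  also have "\<dots> = (1 + q) * (a * (t\<^sup>2 - q)) + 4 * (t\<^sup>2 - q) + 2 * t * (a * (t\<^sup>2 - q))"
    unfolding e by (simp add: algebra_simps)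
  also have "\<dots> = 1 * (1 - q)\<^sup>2"
    unfolding par(4) by (simp add: algebra_simps power2_eq_square)
  finally show bt: "b * (t\<^sup>2 - q) = 1"
    using q by simp
  moreover have "0 \<le> b"
    unfolding b using q a par(1) by simp
  ultimately show "0 < b"
    by (metis less_eq_real_def mult_zero_left zero_neq_one)
  have "a = b * (a * (t\<^sup>2 - q))"
    using bt by (simp add: algebra_simps)
  then show "a = (1 + q - 2 * t) * b"
    unfolding par(4) by simp
qed

lemma item_coefficients:
  fixes q :: real and k :: nat
  assumes q: "0 < q" "q < 1"
  defines "a \<equiv> itemA q k" and "b \<equiv> itemA q (Suc k)" and "\<sigma> \<equiv> itemSigma q k"
    and "\<delta> \<equiv> itemDelta q k" and "\<beta> \<equiv> itemBeta q k"
  shows "\<beta> * (1 - q) * b = a" and "(\<sigma> - 1) * \<delta> = a" and "b = (1 + q * b) * \<delta>\<^sup>2"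
    and "(1 + q) * b - a = 2 * (1 + q * b) * \<delta>"
    and "b * (1 - q) * (1 - \<beta>) = 2 * (1 + q * b) * (1 - q * \<delta>) * \<delta>"
    and "1 + q * a = (1 + q * b) * (1 - q * \<delta>)\<^sup>2"
    and "1 \<le> \<sigma>" and "0 < \<delta>"
proof -
  have a: "0 \<le> a"
    unfolding a_def using q by (simp add: itemA_nonneg)
  have \<sigma>: "\<sigma> = sqrt ((1 + a) * (1 + q * a))"
    unfolding \<sigma>_def a_def itemSigma_def ..
  have b: "b = ((1 + q) * a + 2 * (1 + \<sigma>)) / (1 - q)\<^sup>2"
    unfolding b_def a_def \<sigma>_def itemSigma_def by simp
  define t where "t = (1 + q + q * a) / (1 + \<sigma>)"
  note par\<sigma> = itemSigma_parametrisation[OF q(1) a \<sigma> t_def]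
  note par = itemA_Suc_parametrisation[OF q a \<sigma> b t_def]
  have bt: "1 + q * b = b * t\<^sup>2"
    using par(1) by (simp add: algebra_simps)
  have \<delta>: "\<delta> = 1 / t"
  proof -
    have "b / (1 + q * b) = (1 / t)\<^sup>2"
      unfolding bt using par\<sigma>(2) par(3) by (simp add: power_one_over)
    then show ?thesis
      unfolding \<delta>_def itemDelta_def b_def[symmetric] using par\<sigma>(2) by simp
  qed
  have \<beta>: "\<beta> * (1 - q) * b = a"
    unfolding \<beta>_def itemBeta_def a_def[symmetric] b_def[symmetric] using q par(3) by simp
  then show "\<beta> * (1 - q) * b = a" .
  show "(\<sigma> - 1) * \<delta> = a" and "b = (1 + q * b) * \<delta>\<^sup>2"
    unfolding par\<sigma>(3) \<delta> bt using par\<sigma>(2) by (simp_all add: power2_eq_square)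
  have "(1 + q) * b - a = 2 * (b * t\<^sup>2) * (1 / t)"
    using par(2) par\<sigma>(2) by (simp add: algebra_simps power2_eq_square)
  then show "(1 + q) * b - a = 2 * (1 + q * b) * \<delta>"
    unfolding \<delta> bt .
  have "b * (1 - q) * (1 - \<beta>) = 2 * b * (t - q)"
    using \<beta> par(2) by (simp add: algebra_simps)
  also have "\<dots> = 2 * (b * t\<^sup>2) * (1 - q * (1 / t)) * (1 / t)"
    using par\<sigma>(2) by (simp add: field_simps power2_eq_square)
  finally show "b * (1 - q) * (1 - \<beta>) = 2 * (1 + q * b) * (1 - q * \<delta>) * \<delta>"
    unfolding \<delta> bt .
  have "1 + q * a = b * (t\<^sup>2 - q) + q * ((1 + q - 2 * t) * b)"
    using par(1,2) by simp
  also have "\<dots> = (b * t\<^sup>2) * (1 - q * (1 / t))\<^sup>2"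
    using par\<sigma>(2) by (simp add: field_simps power2_eq_square)
  finally show "1 + q * a = (1 + q * b) * (1 - q * \<delta>)\<^sup>2"
    unfolding \<delta> bt .
  show "1 \<le> \<sigma>" and "0 < \<delta>"
    using par\<sigma>(1,2) \<delta> by simp_all
qed

lemma itemZ_Suc:
  "itemZ L \<mu> gf g x0 (Suc k) = prox (itemDelta (\<mu> / L) k / L) g (itemZbar L \<mu> gf g x0 k)"
  by (simp add: itemZ_def itemZbar_def itemY_def itemX_def Let_def split: prod.splits)

lemma itemS_Suc:
  "itemS L \<mu> gf g x0 (Suc k)
     = (L / itemDelta (\<mu> / L) k) *\<^sub>R (itemZbar L \<mu> gf g x0 k - itemZ L \<mu> gf g x0 (Suc k))"
  by (simp add: itemS_def)

lemma itemX_Suc: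
  assumes "L \<noteq> 0"
  shows "itemX L \<mu> gf g x0 (Suc k)
           = itemY L \<mu> gf g x0 k - (1 / L) *\<^sub>R (gf (itemY L \<mu> gf g x0 k) + itemS L \<mu> gf g x0 (Suc k))"
proof -
  have "itemX L \<mu> gf g x0 (Suc k) = itemY L \<mu> gf g x0 k - (1 / L) *\<^sub>R gf (itemY L \<mu> gf g x0 k)
      - (1 / itemDelta (\<mu> / L) k) *\<^sub>R (itemZbar L \<mu> gf g x0 k - itemZ L \<mu> gf g x0 (Suc k))"
    by (simp add: itemX_def itemZ_def itemY_def itemZbar_def Let_def split: prod.splits)
  moreover have "(1 / L) *\<^sub>R itemS L \<mu> gf g x0 (Suc k)
      = (1 / itemDelta (\<mu> / L) k) *\<^sub>R (itemZbar L \<mu> gf g x0 k - itemZ L \<mu> gf g x0 (Suc k))"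
    using assms by (simp add: itemS_Suc)
  ultimately show ?thesis
    by (metis diff_diff_eq scaleR_add_right)
qed

text \<open>For \<open>k = 0\<close> this holds because \<open>\<beta>\<^sub>0 = 0\<close>, whatever \<open>y\<^sup>-\<^sup>1\<close> and \<open>s\<^sub>g\<^sup>0\<close> are.\<close>
lemma itemY_recursion:
  assumes "L \<noteq> 0"
  shows "itemY L \<mu> gf g x0 k = (1 - itemBeta (\<mu> / L) k) *\<^sub>R itemZ L \<mu> gf g x0 k
           + itemBeta (\<mu> / L) k *\<^sub>R (itemY L \<mu> gf g x0 (k - 1)
              - (1 / L) *\<^sub>R (gf (itemY L \<mu> gf g x0 (k - 1)) + itemS L \<mu> gf g x0 k))"
proof (cases k)
  case 0
  then show ?thesis
    by (simp add: itemY_def itemBeta_def)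
next
  case (Suc j)
  then show ?thesis
    using itemX_Suc[OF assms, of \<mu> gf g x0 j] by (simp add: itemY_def)
qed

lemma itemZ_Suc_recursion:
  assumes "L \<noteq> 0" and "itemDelta (\<mu> / L) k \<noteq> 0"
  shows "itemZ L \<mu> gf g x0 (Suc k)
           = (1 - \<mu> / L * itemDelta (\<mu> / L) k) *\<^sub>R itemZ L \<mu> gf g x0 k
             + (\<mu> / L * itemDelta (\<mu> / L) k) *\<^sub>R itemY L \<mu> gf g x0 k
             - (itemDelta (\<mu> / L) k / L) *\<^sub>R gf (itemY L \<mu> gf g x0 k)
             - (itemDelta (\<mu> / L) k / L) *\<^sub>R itemS L \<mu> gf g x0 (Suc k)"
proof -
  have "(itemDelta (\<mu> / L) k / L) *\<^sub>R itemS L \<mu> gf g x0 (Suc k)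
      = itemZbar L \<mu> gf g x0 k - itemZ L \<mu> gf g x0 (Suc k)"
    using assms by (simp add: itemS_Suc)
  then show ?thesis
    by (simp add: itemZbar_def Let_def algebra_simps)
qed

lemma itemZ_Suc_subgradient:
  fixes g :: "'a::{real_inner,complete_space} \<Rightarrow> ereal"
  assumes "0 < \<mu>" and "\<mu> < L"
    and cv: "ext_convex g" and pr: "ext_proper g" and lsc: "ext_lsc g"
  shows "g (itemZ L \<mu> gf g x0 (Suc k)) \<noteq> \<infinity>"
    and "g (itemZ L \<mu> gf g x0 (Suc k)) + ereal (inner (itemS L \<mu> gf g x0 (Suc k)) (w - itemZ L \<mu> gf g x0 (Suc k)))
           \<le> g w"
proof -
  have "0 < itemDelta (\<mu> / L) k"
    using assms(1,2) by (intro item_coefficients(8)) auto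
  then have \<gamma>: "0 < itemDelta (\<mu> / L) k / L"
    using assms(1,2) by simp
  then show "g (itemZ L \<mu> gf g x0 (Suc k)) \<noteq> \<infinity>"
    unfolding itemZ_Suc by (rule prox_minimizes(1)[OF cv pr lsc])
  show "g (itemZ L \<mu> gf g x0 (Suc k)) + ereal (inner (itemS L \<mu> gf g x0 (Suc k)) (w - itemZ L \<mu> gf g x0 (Suc k)))
      \<le> g w"
    using prox_subgradient[OF cv pr lsc \<gamma>] unfolding itemS_Suc itemZ_Suc by simp
qed

section \<open>The Lyapunov function\<close>

lemma lyapunov_quadratic_identity:
  fixes Z w u v :: "'a::real_inner"
  assumes r1: "(\<sigma> - 1) * \<delta> = a"
    and r2: "b = (1 + q * b) * \<delta>\<^sup>2"
    and r3: "(1 + q) * b - a = 2 * (1 + q * b) * \<delta>"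
    and r4: "c = 2 * (1 + q * b) * (1 - q * \<delta>) * \<delta>"
    and r5: "1 + q * a = (1 + q * b) * (1 - q * \<delta>)\<^sup>2"
  shows "inner w (b *\<^sub>R w + a *\<^sub>R v - c *\<^sub>R Z) + (q * a + 1 - \<sigma>) * inner v Z
     + (\<sigma> - 1) * inner v ((1 - q * \<delta>) *\<^sub>R Z - \<delta> *\<^sub>R (w + u))
     - ((1 + q) * b - a) * inner u ((1 - q * \<delta>) *\<^sub>R Z - \<delta> *\<^sub>R (w + u))
     + a / 2 * (norm v)\<^sup>2 + (1 + q * a) * (norm Z)\<^sup>2 - b / 2 * (norm u)\<^sup>2
     - (1 + q * b) * (norm ((1 - q * \<delta>) *\<^sub>R Z - \<delta> *\<^sub>R (w + u)))\<^sup>2 - (b - a) / 2 * (norm u)\<^sup>2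
     - a / 2 * (norm (v - u))\<^sup>2 = 0" (is "?lhs = 0")
proof -
  have "?lhs
   = (a - (\<sigma> - 1) * \<delta>) * (inner v w + inner v u) + q * (a - (\<sigma> - 1) * \<delta>) * inner v Z
     + ((1 + q * a) - (1 + q * b) * (1 - q * \<delta>)\<^sup>2) * inner Z Z
     + (2 * (1 + q * b) * (1 - q * \<delta>) * \<delta> - c) * inner w Z
     + (2 * (1 + q * b) * \<delta> - ((1 + q) * b - a)) * (1 - q * \<delta>) * inner u Z
     + (b - (1 + q * b) * \<delta>\<^sup>2) * inner w w
     + (((1 + q) * b - a) * \<delta> - 2 * (1 + q * b) * \<delta>\<^sup>2) * inner w u
     + ((((1 + q) * b - a) - 2 * (1 + q * b) * \<delta>) * \<delta> + ((1 + q * b) * \<delta>\<^sup>2 - b)) * inner u u"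
    unfolding power2_norm_eq_inner
    by (simp add: inner_commute algebra_simps power2_eq_square) (simp add: field_simps)
  also have "\<dots> = 0"
    using r1 r2 r3 r4 r5 by (simp add: power2_eq_square)
  finally show ?thesis .
qed

definition Ig_real :: "('a::real_inner \<Rightarrow> real) \<Rightarrow> 'a \<Rightarrow> 'a \<Rightarrow> 'a \<Rightarrow> real" where
  "Ig_real g x y s = g x - g y - inner s (x - y)"

definition lyapunov_real ::
    "real \<Rightarrow> real \<Rightarrow> ('a::real_inner \<Rightarrow> real) \<Rightarrow> ('a \<Rightarrow> 'a) \<Rightarrow> ('a \<Rightarrow> real) \<Rightarrow> 'a
      \<Rightarrow> real \<Rightarrow> real \<Rightarrow> 'a \<Rightarrow> 'a \<Rightarrow> 'a \<Rightarrow> real" where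
  "lyapunov_real L \<mu> f gf g xs A \<sigma> y z s =
     (1 - \<mu> / L) * A * If L \<mu> f gf y xs + \<mu> / L * A * Ig_real g xs z s
     + (\<mu> / L * A + 1 - \<sigma>) * Ig_real g z xs (- gf xs)
     + A / (2 * L) * (norm (s + gf xs))\<^sup>2 + (L + \<mu> * A) * (norm (z - xs))\<^sup>2"

lemma lyapunov_real_step_identity:
  fixes f :: "'a::real_inner \<Rightarrow> real" and g :: "'a \<Rightarrow> real"
  assumes L: "0 < L" and q: "q < 1" and \<mu>: "\<mu> = q * L"
    and r0: "\<beta> * (1 - q) * b = a"
    and r1: "(\<sigma> - 1) * \<delta> = a"
    and r2: "b = (1 + q * b) * \<delta>\<^sup>2"
    and r3: "(1 + q) * b - a = 2 * (1 + q * b) * \<delta>"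
    and r4: "b * (1 - q) * (1 - \<beta>) = 2 * (1 + q * b) * (1 - q * \<delta>) * \<delta>"
    and r5: "1 + q * a = (1 + q * b) * (1 - q * \<delta>)\<^sup>2"
    and y: "y = (1 - \<beta>) *\<^sub>R z + \<beta> *\<^sub>R (ym - (1 / L) *\<^sub>R (gf ym + s))"
    and zp: "zp = (1 - q * \<delta>) *\<^sub>R z + (q * \<delta>) *\<^sub>R y - (\<delta> / L) *\<^sub>R gf y - (\<delta> / L) *\<^sub>R sp"
  shows "lyapunov_real L \<mu> f gf g xs a \<sigma> ym z s - lyapunov_real L \<mu> f gf g xs b \<sigma>' y zp sp =
     (1 - q) * a * If L \<mu> f gf ym y + (1 - q) * (b - a) * If L \<mu> f gf xs y
     + (\<sigma> - 1) * Ig_real g zp z s + (b - a + \<sigma>' - \<sigma>) * Ig_real g zp xs (- gf xs)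
     + (b - a) * Ig_real g xs zp sp
     + (b - a) / (2 * L) * (norm (sp + gf xs))\<^sup>2 + a / (2 * L) * (norm (s - sp))\<^sup>2"
    (is "?lhs = ?rhs")
proof -
  have L_ne: "L \<noteq> 0" and q_ne: "q \<noteq> 1"
    using L q by auto
  define Z where "Z = z - xs"
  define w where "w = (1 / L) *\<^sub>R (gf y - gf xs) - q *\<^sub>R (y - xs)"
  define u where "u = (1 / L) *\<^sub>R (sp + gf xs)"
  define v where "v = (1 / L) *\<^sub>R (s + gf xs)"
  define Zp where "Zp = (1 - q * \<delta>) *\<^sub>R Z - \<delta> *\<^sub>R (w + u)"
  have Zp_eq: "zp - xs = Zp"
    unfolding Zp_def zp Z_def w_def u_def by (simp add: algebra_simps)
  have s: "s + gf xs = L *\<^sub>R v" and sp: "sp + gf xs = L *\<^sub>R u" and s_sp: "s - sp = L *\<^sub>R (v - u)"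
    unfolding v_def u_def using L by (simp_all add: algebra_simps)
  text \<open>After cancelling the values of \<open>g\<close>, the difference of the two sides splits into
    the \<open>If\<close> part and a quadratic form in \<open>Z, w, u, v\<close>.\<close>
  have "?lhs - ?rhs
    = ((1 - q) * a * (If L \<mu> f gf ym xs - If L \<mu> f gf ym y - If L \<mu> f gf y xs)
        - (1 - q) * (b - a) * (If L \<mu> f gf xs y + If L \<mu> f gf y xs))
      + ((q * a + 1 - \<sigma>) * inner (s + gf xs) Z + (\<sigma> - 1) * inner (s + gf xs) (zp - xs)
        - ((1 + q) * b - a) * inner (sp + gf xs) (zp - xs)
        + a / (2 * L) * (norm (s + gf xs))\<^sup>2 + (L + \<mu> * a) * (norm Z)\<^sup>2
        - b / (2 * L) * (norm (sp + gf xs))\<^sup>2 - (L + \<mu> * b) * (norm (zp - xs))\<^sup>2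
        - (b - a) / (2 * L) * (norm (sp + gf xs))\<^sup>2 - a / (2 * L) * (norm (s - sp))\<^sup>2)"
    unfolding lyapunov_real_def Ig_real_def Z_def \<mu> using L
    by (simp add: algebra_simps)
  also have "\<dots> = L * (inner w (b *\<^sub>R w + a *\<^sub>R v - (b * (1 - q) * (1 - \<beta>)) *\<^sub>R Z)
        + (q * a + 1 - \<sigma>) * inner v Z + (\<sigma> - 1) * inner v Zp - ((1 + q) * b - a) * inner u Zp
        + a / 2 * (norm v)\<^sup>2 + (1 + q * a) * (norm Z)\<^sup>2 - b / 2 * (norm u)\<^sup>2
        - (1 + q * b) * (norm Zp)\<^sup>2 - (b - a) / 2 * (norm u)\<^sup>2 - a / 2 * (norm (v - u))\<^sup>2)"
    unfolding If_weighted_combination[where f = f and gf = gf and ym = ym and xs = xs,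
        OF L_ne q_ne \<mu> r0 y, folded w_def v_def Z_def] Zp_eq s sp s_sp
      inner_scaleR_left norm_scaleR power_mult_distrib abs_of_pos[OF L]
    unfolding \<mu> using L by (simp add: power2_eq_square field_simps)
  also have "\<dots> = 0"
    unfolding Zp_def lyapunov_quadratic_identity[OF r1 r2 r3 r4 r5] by simp
  finally show ?thesis
    by simp
qed

lemma Ig_real_nonneg:
  assumes pr: "ext_proper g" and gx: "g x \<noteq> \<infinity>" and gy: "g y \<noteq> \<infinity>"
    and sub: "g y + ereal (inner s (x - y)) \<le> g x"
  shows "0 \<le> Ig_real (\<lambda>w. real_of_ereal (g w)) x y s"
proof -
  obtain rx ry where "g x = ereal rx" and "g y = ereal ry"
    using ext_proper_finite[OF pr gx] ext_proper_finite[OF pr gy] by metis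
  then show ?thesis
    using sub by (simp add: Ig_real_def)
qed

lemma itemSigma_le_Suc:
  assumes "0 < q" and "q < 1"
  shows "itemSigma q k \<le> itemSigma q (Suc k)"
proof -
  have "0 \<le> itemA q k"
    using assms by (simp add: itemA_nonneg)
  moreover have "itemA q k \<le> itemA q (Suc k)"
    by (rule itemA_le_Suc[OF assms])
  ultimately have "(1 + itemA q k) * (1 + q * itemA q k) \<le> (1 + itemA q (Suc k)) * (1 + q * itemA q (Suc k))"
    using assms by (intro mult_mono) (auto intro: mult_left_mono simp del: itemA.simps)
  then show ?thesis
    unfolding itemSigma_def by (simp del: itemA.simps)
qed

definition itemV_real where
  "itemV_real L \<mu> f gf g x0 xs k =
     lyapunov_real L \<mu> f gf (\<lambda>w. real_of_ereal (g w)) xs (itemA (\<mu> / L) k) (itemSigma (\<mu> / L) k)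
       (itemY L \<mu> gf g x0 (k - 1)) (itemZ L \<mu> gf g x0 k) (itemS L \<mu> gf g x0 k)"

text \<open>For \<open>k = 0\<close> the terms involving \<open>g (z\<^sup>0)\<close>, possibly infinite, carry the factors
  \<open>A\<^sub>0 = 0\<close> and \<open>1 - \<sigma>\<^sub>0 = 0\<close>, and \<open>0 * \<infinity> = 0\<close> in \<open>ereal\<close>.\<close>
lemma itemV_eq_itemV_real:
  fixes g :: "'a::{real_inner,complete_space} \<Rightarrow> ereal"
  assumes "0 < \<mu>" and "\<mu> < L"
    and cv: "ext_convex g" and pr: "ext_proper g" and lsc: "ext_lsc g" and gxs: "g xs \<noteq> \<infinity>"
  shows "itemV L \<mu> f gf g x0 xs k = ereal (itemV_real L \<mu> f gf g x0 xs k)"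
proof -
  obtain rx where rx: "g xs = ereal rx"
    using ext_proper_finite[OF pr gxs] by metis
  show ?thesis
  proof (cases k)
    case 0
    then show ?thesis
      by (simp add: itemV_def itemV_real_def lyapunov_real_def Ig_real_def itemSigma_def Let_def
          flip: zero_ereal_def)
  next
    case (Suc j)
    obtain rz where "g (itemZ L \<mu> gf g x0 k) = ereal rz"
      using ext_proper_finite[OF pr itemZ_Suc_subgradient(1)[OF assms(1-5)]] Suc by metis
    then show ?thesis
      using rx by (simp add: itemV_def itemV_real_def lyapunov_real_def Ig_real_def Ig_def Let_def)
  qed
qed

lemma lyapunov_real_le:
  fixes f :: "'a::real_inner \<Rightarrow> real" and g :: "'a \<Rightarrow> real"
  assumes L: "0 < L" and q: "q < 1" and \<mu>: "\<mu> = q * L"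
    and r0: "\<beta> * (1 - q) * b = a"
    and r1: "(\<sigma> - 1) * \<delta> = a"
    and r2: "b = (1 + q * b) * \<delta>\<^sup>2"
    and r3: "(1 + q) * b - a = 2 * (1 + q * b) * \<delta>"
    and r4: "b * (1 - q) * (1 - \<beta>) = 2 * (1 + q * b) * (1 - q * \<delta>) * \<delta>"
    and r5: "1 + q * a = (1 + q * b) * (1 - q * \<delta>)\<^sup>2"
    and y: "y = (1 - \<beta>) *\<^sub>R z + \<beta> *\<^sub>R (ym - (1 / L) *\<^sub>R (gf ym + s))"
    and zp: "zp = (1 - q * \<delta>) *\<^sub>R z + (q * \<delta>) *\<^sub>R y - (\<delta> / L) *\<^sub>R gf y - (\<delta> / L) *\<^sub>R sp"
    and a: "0 \<le> a" "a \<le> b" and \<sigma>: "\<sigma> \<le> \<sigma>'"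
    and If1: "0 \<le> If L \<mu> f gf ym y" and If2: "0 \<le> If L \<mu> f gf xs y"
    and Ig1: "0 \<le> (\<sigma> - 1) * Ig_real g zp z s" and Ig2: "0 \<le> Ig_real g zp xs (- gf xs)"
    and Ig3: "0 \<le> Ig_real g xs zp sp"
  shows "lyapunov_real L \<mu> f gf g xs b \<sigma>' y zp sp \<le> lyapunov_real L \<mu> f gf g xs a \<sigma> ym z s"
proof -
  have "0 \<le> (1 - q) * a * If L \<mu> f gf ym y" and "0 \<le> (1 - q) * (b - a) * If L \<mu> f gf xs y"
    and "0 \<le> (b - a + \<sigma>' - \<sigma>) * Ig_real g zp xs (- gf xs)" and "0 \<le> (b - a) * Ig_real g xs zp sp"
    and "0 \<le> (b - a) / (2 * L) * (norm (sp + gf xs))\<^sup>2" and "0 \<le> a / (2 * L) * (norm (s - sp))\<^sup>2"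
    using q L a \<sigma> If1 If2 Ig2 Ig3 by (auto intro!: mult_nonneg_nonneg)
  then show ?thesis
    using Ig1 lyapunov_real_step_identity[OF L q \<mu> r0 r1 r2 r3 r4 r5 y zp, of f g xs \<sigma>'] by linarith
qed

lemma itemV_real_Suc_le:
  fixes f :: "'a::{real_inner,complete_space} \<Rightarrow> real" and g :: "'a \<Rightarrow> ereal"
  assumes \<mu>: "0 < \<mu>" "\<mu> < L"
    and grad: "\<And>x. GDERIV f x :> gf x" and sc: "strongly_convex \<mu> f" and lip: "L-lipschitz_on UNIV gf"
    and cv: "ext_convex g" and pr: "ext_proper g" and lsc: "ext_lsc g"
    and gxs: "g xs \<noteq> \<infinity>" and sxs: "\<And>w. g xs + ereal (inner (- gf xs) (w - xs)) \<le> g w"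
  shows "itemV_real L \<mu> f gf g x0 xs (Suc k) \<le> itemV_real L \<mu> f gf g x0 xs k"
proof -
  let ?Z = "itemZ L \<mu> gf g x0" and ?S = "itemS L \<mu> gf g x0" and ?g = "\<lambda>w. real_of_ereal (g w)"
  have L: "0 < L" and q: "0 < \<mu> / L" "\<mu> / L < 1" and \<mu>q: "\<mu> = \<mu> / L * L"
    using \<mu> by auto
  note coeff = item_coefficients[OF q, of k]
  note sub_Suc = itemZ_Suc_subgradient[OF \<mu> cv pr lsc]
  have L_ne: "L \<noteq> 0" and \<delta>_ne: "itemDelta (\<mu> / L) k \<noteq> 0"
    using L coeff(8) by auto
  have Ig1: "0 \<le> (itemSigma (\<mu> / L) k - 1) * Ig_real ?g (?Z (Suc k)) (?Z k) (?S k)"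
  proof (cases k)
    case (Suc j)
    have "0 \<le> Ig_real ?g (?Z (Suc k)) (?Z k) (?S k)"
      using Ig_real_nonneg[OF pr sub_Suc(1) sub_Suc(1) sub_Suc(2)] Suc by blast
    then show ?thesis
      using coeff(7) by simp
  qed (simp add: itemSigma_def)
  show ?thesis
    unfolding itemV_real_def diff_Suc_1
    by (rule lyapunov_real_le[OF L q(2) \<mu>q coeff(1-6) itemY_recursion[OF L_ne]
          itemZ_Suc_recursion[OF L_ne \<delta>_ne] itemA_nonneg[OF less_imp_le[OF q(1)]] itemA_le_Suc[OF q]
          itemSigma_le_Suc[OF q] If_nonneg[OF \<mu>(2) grad sc lip] If_nonneg[OF \<mu>(2) grad sc lip] Ig1
          Ig_real_nonneg[OF pr sub_Suc(1) gxs sxs] Ig_real_nonneg[OF pr gxs sub_Suc]])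
qed

theorem lemma2:
  fixes f :: "'a::{real_inner, complete_space} \<Rightarrow> real"
    and gf :: "'a \<Rightarrow> 'a"
    and g :: "'a \<Rightarrow> ereal"
    and \<mu> L :: real
    and x0 xs :: 'a
  assumes "0 < \<mu>" and "\<mu> < L"
    and "\<And>x. GDERIV f x :> gf x"
    and "strongly_convex \<mu> f"
    and "L-lipschitz_on UNIV gf"
    and "ext_convex g" and "ext_proper g" and "ext_lsc g"
    and "\<And>x. ereal (f xs) + g xs \<le> ereal (f x) + g x"
  shows "itemV L \<mu> f gf g x0 xs (Suc k) \<le> itemV L \<mu> f gf g x0 xs k"
proof -
  note gxs = composite_minimizer_subgradient(1)[OF assms(3,5,6,7,9)]
  note sxs = composite_minimizer_subgradient(2)[OF assms(3,5,6,7,9)]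
  have "itemV_real L \<mu> f gf g x0 xs (Suc k) \<le> itemV_real L \<mu> f gf g x0 xs k"
    by (rule itemV_real_Suc_le[OF assms(1-8) gxs sxs])
  then show ?thesis
    using itemV_eq_itemV_real[OF assms(1,2,6,7,8) gxs] by simp
qed

end
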